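(* Let $0<\alpha<1$, let $x>0$ be fixed, let $y$ be a sufficiently differentiable function on $[0,x]$, and for a positive integer $n$ put $h=x/n$, $y_j=y(jh)$. Then, as $n\to\infty$, $$\frac{1}{h^\alpha}\sum_{k=0}^{n}\sigma_k^{(\alpha)}y_{n-k}=h^{2-\alpha}\sum_{k=1}^{n-1}k^{1-\alpha}\,y''\big((n-k)h\big)+(nh)^{1-\alpha}\,y'\!\left(\tfrac{h}{2}\right)+O\left(h^2\right).$$
   Context: Define $\sigma_0^{(\alpha)}=1$, $\sigma_n^{(\alpha)}=(n-1)^{1-\alpha}-n^{1-\alpha}$, and $\sigma_k^{(\alpha)}=(k-1)^{1-\alpha}-2k^{1-\alpha}+(k+1)^{1-\alpha}$ for $1\le k\le n-1$. "Sufficiently differentiable" means $y\in C^r[0,x]$ for some sufficiently large $r$. *)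

theory Defs
  imports "HOL-Analysis.Analysis" "HOL-Library.Landau_Symbols"
begin

definition sigma :: "real \<Rightarrow> nat \<Rightarrow> nat \<Rightarrow> real" where
  "sigma \<alpha> n k =
     (if k = 0 then 1
      else if k = n then real (n - 1) powr (1 - \<alpha>) - real n powr (1 - \<alpha>)
      else real (k - 1) powr (1 - \<alpha>) - 2 * real k powr (1 - \<alpha>)
           + real (k + 1) powr (1 - \<alpha>))"

definition C_r_derivs :: "nat \<Rightarrow> real \<Rightarrow> (real \<Rightarrow> real) \<Rightarrow> (nat \<Rightarrow> real \<Rightarrow> real) \<Rightarrow> bool" where
  "C_r_derivs r x y D \<longleftrightarrow>
     D 0 = y \<and>
     (\<forall>k<r. \<forall>t\<in>{0..x}. (D k has_real_derivative D (Suc k) t) (at t within {0..x})) \<and>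
     continuous_on {0..x} (D r)"

end

theory Submission
  imports Defs
begin

text \<open>Summation by parts (the weights sigma are second differences of k powr (1 - alpha))
  turns the scheme into n^(1-alpha) (y_1 - y_0) + sum_k k^(1-alpha) (y_(n-k+1) - 2 y_(n-k) + y_(n-k-1)).
  By Taylor's theorem each second difference is h^2 y'' at the middle node up to O(h^4), and
  y_1 - y_0 = h y'(h/2) + O(h^3). The weights are at most n^(1-alpha) and fewer than n in number,
  so after the factor h^(-alpha) the error is O(n^(1-alpha) h^(-alpha) (h^3 + n h^4)) = O(h^2),
  because n h = x is fixed.\<close>

lemma sum_sigma_Suc:
  fixes Y :: "nat \<Rightarrow> real"
  assumes "1 \<le> n"
  shows "(\<Sum>k=0..Suc n. sigma \<alpha> (Suc n) k * Y (Suc n - k)) =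
     (\<Sum>k=0..n. sigma \<alpha> n k * Y (Suc (n - k)))
     + (real (n+1) powr (1-\<alpha>) - real n powr (1-\<alpha>)) * (Y 1 - Y 0)"
proof -
  define a where "a k = real k powr (1-\<alpha>)" for k
  have last2: "sigma \<alpha> (Suc n) n = a (n-1) - 2 * a n + a (n+1)"
      "sigma \<alpha> (Suc n) (Suc n) = a n - a (n+1)" "sigma \<alpha> n n = a (n-1) - a n"
    using assms by (simp_all add: sigma_def a_def)
  have "(\<Sum>k=0..Suc n. sigma \<alpha> (Suc n) k * Y (Suc n - k))
      = (\<Sum>k=0..<n. sigma \<alpha> (Suc n) k * Y (Suc n - k)) + sigma \<alpha> (Suc n) n * Y 1
        + sigma \<alpha> (Suc n) (Suc n) * Y 0"
    by (simp add: sum.atLeast0_atMost_Suc atLeastLessThanSuc_atLeastAtMost[symmetric])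
  also have "(\<Sum>k=0..<n. sigma \<alpha> (Suc n) k * Y (Suc n - k))
      = (\<Sum>k=0..<n. sigma \<alpha> n k * Y (Suc (n - k)))"
    by (rule sum.cong) (auto simp: sigma_def Suc_diff_le)
  also have "\<dots> = (\<Sum>k=0..n. sigma \<alpha> n k * Y (Suc (n - k))) - sigma \<alpha> n n * Y 1"
    by (simp add: atLeastLessThanSuc_atLeastAtMost[symmetric])
  finally show ?thesis
    unfolding last2 a_def[symmetric] by (simp add: algebra_simps)
qed

lemma sum_sigma_eq_second_differences:
  fixes Y :: "nat \<Rightarrow> real"
  assumes "1 \<le> n"
  shows "(\<Sum>k=0..n. sigma \<alpha> n k * Y (n-k)) =
     real n powr (1-\<alpha>) * (Y 1 - Y 0) +
     (\<Sum>k=1..n-1. real k powr (1-\<alpha>) * (Y (n-k+1) - 2 * Y (n-k) + Y (n-k-1)))"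
  using assms
proof (induction n arbitrary: Y rule: dec_induct)
  case base
  show ?case by (simp add: sigma_def)
next
  case (step n)
  define a where "a k = real k powr (1-\<alpha>)" for k
  have "(\<Sum>k=1..Suc n-1. a k * (Y (Suc n-k+1) - 2 * Y (Suc n-k) + Y (Suc n-k-1)))
     = (\<Sum>k=1..n-1. a k * (Y (Suc n-k+1) - 2 * Y (Suc n-k) + Y (Suc n-k-1)))
       + a n * (Y 2 - 2 * Y 1 + Y 0)"
    using step.hyps by (cases n) (auto simp: numeral_2_eq_2)
  also have "(\<Sum>k=1..n-1. a k * (Y (Suc n-k+1) - 2 * Y (Suc n-k) + Y (Suc n-k-1)))
     = (\<Sum>k=1..n-1. a k * (Y (Suc (n-k+1)) - 2 * Y (Suc (n-k)) + Y (Suc (n-k-1))))"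
  proof (rule sum.cong)
    fix k assume "k \<in> {1..n-1}"
    then have "Suc n - k = Suc (n-k)" "Suc (n - k - 1) = n - k" by auto
    then show "a k * (Y (Suc n-k+1) - 2 * Y (Suc n-k) + Y (Suc n-k-1))
      = a k * (Y (Suc (n-k+1)) - 2 * Y (Suc (n-k)) + Y (Suc (n-k-1)))" by simp
  qed simp
  finally show ?case
    using sum_sigma_Suc[OF step.hyps(1), of \<alpha> Y] step.IH[of "\<lambda>j. Y (Suc j)"]
    unfolding a_def by (simp add: numeral_2_eq_2 algebra_simps)
qed

lemma taylor_remainder_bound:
  fixes D :: "nat \<Rightarrow> real \<Rightarrow> real"
  assumes "0 < p"
    and der: "\<forall>k<p. \<forall>t\<in>{0..x}. (D k has_real_derivative D (Suc k) t) (at t within {0..x})"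
    and bnd: "\<forall>t\<in>{0..x}. \<bar>D p t\<bar> \<le> M"
    and ab: "0 \<le> a" "a \<le> b" "b \<le> x"
  shows "\<bar>D 0 b - (\<Sum>i<p. (b-a)^i/fact i * D i a)\<bar> \<le> M * (b-a)^p"
proof -
  have Df: "(D m has_vector_derivative D (Suc m) t) (at t within {a..b})"
    if "m < p" "a \<le> t" "t \<le> b" for m t
  proof -
    have "(D m has_real_derivative D (Suc m) t) (at t within {0..x})"
      using der that ab by auto
    then have "(D m has_real_derivative D (Suc m) t) (at t within {a..b})"
      by (rule has_field_derivative_subset) (use ab in auto)
    then show ?thesis by (simp add: has_real_derivative_iff_has_vector_derivative)
  qed
  define i where "i s = ((b - s) ^ (p - 1) / fact (p - 1)) *\<^sub>R D p s" for s
  have integral: "(i has_integral D 0 b - (\<Sum>j<p. ((b-a) ^ j / fact j) *\<^sub>R D j a)) {a..b}"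
    unfolding i_def by (rule Taylor_has_integral[of p D "D 0", OF \<open>0 < p\<close> refl Df ab(2)])
  have integrand: "norm (i s) \<le> (b-a)^(p-1) * M" if "s \<in> cbox a b" for s
  proof -
    have s: "a \<le> s" "s \<le> b" using that by auto
    have "norm (i s) = (b - s) ^ (p - 1) / fact (p - 1) * \<bar>D p s\<bar>"
      using s by (simp add: i_def abs_mult)
    also have "\<dots> \<le> (b - s) ^ (p - 1) * \<bar>D p s\<bar>"
      using s by (intro mult_right_mono) (auto simp: divide_le_eq mult_le_cancel_left1)
    also have "\<dots> \<le> (b-a)^(p-1) * M"
      using s bnd ab by (intro mult_mono power_mono) auto
    finally show ?thesis .
  qed
  have "0 \<le> M" using bnd ab by (meson abs_ge_zero atLeastAtMost_iff order_trans)
  then have "norm (D 0 b - (\<Sum>j<p. ((b-a) ^ j / fact j) *\<^sub>R D j a))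
      \<le> (b-a)^(p-1) * M * Henstock_Kurzweil_Integration.content (cbox a b)"
    by (intro has_integral_bound[OF _ integral[folded cbox_interval] integrand]) (use ab in auto)
  also have "\<dots> = M * (b-a)^p" using ab \<open>0 < p\<close>
    by (simp add: power_eq_if[of _ p] algebra_simps)
  finally show ?thesis by simp
qed

lemma midpoint_difference_error:
  fixes D :: "nat \<Rightarrow> real \<Rightarrow> real"
  assumes der: "\<forall>k<3. \<forall>t\<in>{0..x}. (D k has_real_derivative D (Suc k) t) (at t within {0..x})"
    and bnd: "\<forall>t\<in>{0..x}. \<bar>D 3 t\<bar> \<le> M"
    and h: "0 \<le> h" "h \<le> x"
  shows "\<bar>D 0 h - D 0 0 - h * D 1 (h/2)\<bar> \<le> 5/4 * M * h^3"
proof -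
  define R1 where "R1 = D 0 h - (\<Sum>i<3. h^i/fact i * D i 0)"
  define R2 where "R2 = D 1 (h/2) - (\<Sum>i<2. (h/2)^i/fact i * D (Suc i) 0)"
  have R1: "\<bar>R1\<bar> \<le> M * h^3"
    using taylor_remainder_bound[of 3 x D M 0 h] der bnd h unfolding R1_def by simp
  have R2: "\<bar>R2\<bar> \<le> M * (h/2)^2"
    using taylor_remainder_bound[of 2 x "\<lambda>k. D (Suc k)" M 0 "h/2"] der bnd h
    unfolding R2_def by (simp add: numeral_eq_Suc)
  have "D 0 h - D 0 0 - h * D 1 (h/2) = R1 - h * R2"
    unfolding R1_def R2_def by (simp add: eval_nat_numeral algebra_simps power2_eq_square)
  also have "\<bar>\<dots>\<bar> \<le> M * h^3 + h * (M * (h/2)^2)"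
  proof -
    have "\<bar>h * R2\<bar> \<le> h * (M * (h/2)^2)"
      using R2 h by (simp add: abs_mult mult_left_mono)
    then show ?thesis using R1 abs_triangle_ineq4[of R1 "h * R2"] by linarith
  qed
  finally show ?thesis by (simp add: power2_eq_square power3_eq_cube)
qed

lemma second_difference_error:
  fixes D :: "nat \<Rightarrow> real \<Rightarrow> real"
  assumes der: "\<forall>k<4. \<forall>t\<in>{0..x}. (D k has_real_derivative D (Suc k) t) (at t within {0..x})"
    and bnd: "\<forall>t\<in>{0..x}. \<bar>D 4 t\<bar> \<le> M"
    and h: "0 \<le> h" "0 \<le> s" "s + 2*h \<le> x"
  shows "\<bar>D 0 (s+2*h) - 2 * D 0 (s+h) + D 0 s - h^2 * D 2 (s+h)\<bar> \<le> 19 * M * h^4"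
proof -
  define R1 where "R1 = D 0 (s+2*h) - (\<Sum>i<4. (2*h)^i/fact i * D i s)"
  define R2 where "R2 = D 0 (s+h) - (\<Sum>i<4. h^i/fact i * D i s)"
  define R3 where "R3 = D 2 (s+h) - (\<Sum>i<2. h^i/fact i * D (Suc (Suc i)) s)"
  have R1: "\<bar>R1\<bar> \<le> M * (2*h)^4"
    using taylor_remainder_bound[of 4 x D M s "s+2*h"] der bnd h unfolding R1_def by simp
  have R2: "\<bar>R2\<bar> \<le> M * h^4"
    using taylor_remainder_bound[of 4 x D M s "s+h"] der bnd h unfolding R2_def by simp
  have R3: "\<bar>R3\<bar> \<le> M * h^2"
    using taylor_remainder_bound[of 2 x "\<lambda>k. D (Suc (Suc k))" M s "s+h"] der bnd h
    unfolding R3_def by (simp add: numeral_eq_Suc)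
  have "D 0 (s+2*h) - 2 * D 0 (s+h) + D 0 s - h^2 * D 2 (s+h) = R1 - 2 * R2 - h^2 * R3"
    unfolding R1_def R2_def R3_def
    by (simp add: eval_nat_numeral fact_numeral algebra_simps)
  also have "\<bar>\<dots>\<bar> \<le> M * (2*h)^4 + 2 * (M * h^4) + h^2 * (M * h^2)"
  proof -
    have "\<bar>h^2 * R3\<bar> \<le> h^2 * (M * h^2)"
      using R3 by (simp add: abs_mult mult_left_mono)
    then show ?thesis using R1 R2 by (simp only: abs_le_iff) linarith
  qed
  finally show ?thesis by (simp add: algebra_simps)
qed

lemma C_r_derivs_bounded:
  assumes "C_r_derivs r x y D" "k \<le> r"
  shows "\<exists>M. \<forall>t\<in>{0..x}. \<bar>D k t\<bar> \<le> M"
proof -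
  have "continuous_on {0..x} (D k)"
  proof (cases "k = r")
    case False
    with assms show ?thesis
      unfolding C_r_derivs_def by (intro DERIV_continuous_on[where D="D (Suc k)"]) auto
  qed (use assms in \<open>simp add: C_r_derivs_def\<close>)
  then show ?thesis
    using compact_imp_bounded[OF compact_continuous_image[OF _ compact_Icc]]
    by (fastforce simp: bounded_iff)
qed

lemma scheme_error_eq:
  fixes y y1 y2 :: "real \<Rightarrow> real"
  assumes "1 \<le> n" "0 < h"
  shows "1 / h powr \<alpha> * (\<Sum>k=0..n. sigma \<alpha> n k * y (real (n-k) * h))
      - (h powr (2-\<alpha>) * (\<Sum>k=1..n-1. real k powr (1-\<alpha>) * y2 (real (n-k) * h))
         + (real n * h) powr (1-\<alpha>) * y1 (h/2))
    = h powr (-\<alpha>) * (real n powr (1-\<alpha>) * (y h - y 0 - h * y1 (h/2))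
        + (\<Sum>k=1..n-1. real k powr (1-\<alpha>) * (y (real (n-k+1) * h) - 2 * y (real (n-k) * h)
                          + y (real (n-k-1) * h) - h^2 * y2 (real (n-k) * h))))"
proof -
  have powrs: "1 / h powr \<alpha> = h powr (-\<alpha>)" "h powr (2-\<alpha>) = h powr (-\<alpha>) * h^2"
      "(real n * h) powr (1-\<alpha>) = real n powr (1-\<alpha>) * (h powr (-\<alpha>) * h)"
    using assms by (simp_all add: powr_minus divide_inverse powr_diff powr_mult powr_numeral)
  have split: "(\<Sum>k=1..n-1. real k powr (1-\<alpha>) * (y (real (n-k+1) * h) - 2 * y (real (n-k) * h)
                          + y (real (n-k-1) * h) - h^2 * y2 (real (n-k) * h)))
    = (\<Sum>k=1..n-1. real k powr (1-\<alpha>) * (y (real (n-k+1) * h) - 2 * y (real (n-k) * h)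
                          + y (real (n-k-1) * h)))
      - h^2 * (\<Sum>k=1..n-1. real k powr (1-\<alpha>) * y2 (real (n-k) * h))"
    unfolding sum_distrib_left sum_subtractf[symmetric] by (rule sum.cong) (auto simp: algebra_simps)
  show ?thesis
    unfolding powrs split sum_sigma_eq_second_differences[OF assms(1), of \<alpha> "\<lambda>j. y (real j * h)"]
    by (simp add: algebra_simps)
qed

lemma weighted_error_sum_bound:
  fixes e :: "nat \<Rightarrow> real"
  assumes "\<alpha> \<le> 1" "\<bar>e0\<bar> \<le> E0" "\<forall>k\<in>{1..n-1}. \<bar>e k\<bar> \<le> E" "0 \<le> E"
  shows "\<bar>real n powr (1-\<alpha>) * e0 + (\<Sum>k=1..n-1. real k powr (1-\<alpha>) * e k)\<bar>
    \<le> real n powr (1-\<alpha>) * (E0 + real n * E)"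
proof -
  have "\<bar>\<Sum>k=1..n-1. real k powr (1-\<alpha>) * e k\<bar> \<le> (\<Sum>k=1..n-1. real n powr (1-\<alpha>) * E)"
    using assms by (intro order.trans[OF sum_abs] sum_mono)
      (auto simp: abs_mult intro!: mult_mono powr_mono2)
  also have "\<dots> = real (n-1) * (real n powr (1-\<alpha>) * E)"
    by simp
  also have "\<dots> \<le> real n * (real n powr (1-\<alpha>) * E)"
    using assms by (intro mult_right_mono) auto
  finally have "\<bar>\<Sum>k=1..n-1. real k powr (1-\<alpha>) * e k\<bar> \<le> real n powr (1-\<alpha>) * (real n * E)"
    by (simp add: mult.left_commute)
  moreover have "\<bar>real n powr (1-\<alpha>) * e0\<bar> \<le> real n powr (1-\<alpha>) * E0"
    using assms(2) by (simp add: abs_mult mult_left_mono)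
  ultimately show ?thesis
    unfolding distrib_left by (meson abs_triangle_ineq add_mono order_trans)
qed

lemma scheme_error_bound:
  fixes D :: "nat \<Rightarrow> real \<Rightarrow> real"
  assumes der: "\<forall>k<4. \<forall>t\<in>{0..x}. (D k has_real_derivative D (Suc k) t) (at t within {0..x})"
    and bnd: "\<forall>t\<in>{0..x}. \<bar>D 3 t\<bar> \<le> M" "\<forall>t\<in>{0..x}. \<bar>D 4 t\<bar> \<le> M" "0 \<le> M"
    and "\<alpha> \<le> 1" "0 < x" "1 \<le> n"
  defines "h \<equiv> x / real n"
  shows "\<bar>1 / h powr \<alpha> * (\<Sum>k=0..n. sigma \<alpha> n k * D 0 (real (n-k) * h))
      - (h powr (2-\<alpha>) * (\<Sum>k=1..n-1. real k powr (1-\<alpha>) * D 2 (real (n-k) * h))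
         + (real n * h) powr (1-\<alpha>) * D 1 (h/2))\<bar>
    \<le> x powr (-\<alpha>) * (5/4 * M * x + 19 * M * x^2) * h^2"
proof -
  have h: "0 < h" "x = real n * h" using assms by (auto simp: h_def)
  have "h \<le> x" using h \<open>1 \<le> n\<close> by (simp add: mult_le_cancel_right1)
  then have first: "\<bar>D 0 h - D 0 0 - h * D 1 (h/2)\<bar> \<le> 5/4 * M * h^3"
    using der bnd(1) h by (intro midpoint_difference_error) auto
  have second: "\<forall>k\<in>{1..n-1}. \<bar>D 0 (real (n-k+1) * h) - 2 * D 0 (real (n-k) * h)
      + D 0 (real (n-k-1) * h) - h^2 * D 2 (real (n-k) * h)\<bar> \<le> 19 * M * h^4"
  proof
    fix k assume k: "k \<in> {1..n-1}"
    define s where "s = real (n-k-1) * h"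
    have nodes: "real (n-k+1) * h = s + 2*h" "real (n-k) * h = s + h"
      using k by (auto simp: s_def of_nat_diff algebra_simps)
    have "s + 2*h \<le> x"
      using k h unfolding nodes(1)[symmetric] by (auto intro: mult_right_mono)
    then show "\<bar>D 0 (real (n-k+1) * h) - 2 * D 0 (real (n-k) * h)
      + D 0 (real (n-k-1) * h) - h^2 * D 2 (real (n-k) * h)\<bar> \<le> 19 * M * h^4"
      unfolding nodes s_def[symmetric] using der bnd(2) h
      by (intro second_difference_error) (auto simp: s_def)
  qed
  have "h powr (-\<alpha>) * real n powr (1-\<alpha>) = x powr (-\<alpha>) * real n"
    using h by (simp add: powr_mult powr_diff powr_minus divide_inverse)
  then have scale: "h powr (-\<alpha>) * (real n powr (1-\<alpha>) * (5/4 * M * h^3 + real n * (19 * M * h^4)))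
      = x powr (-\<alpha>) * (5/4 * M * x + 19 * M * x^2) * h^2"
    unfolding h(2) by (simp add: algebra_simps power2_eq_square eval_nat_numeral)
  have "0 \<le> 19 * M * h^4" using bnd(3) by simp
  from weighted_error_sum_bound[OF \<open>\<alpha> \<le> 1\<close> first second this]
  have "h powr (-\<alpha>) * \<bar>real n powr (1-\<alpha>) * (D 0 h - D 0 0 - h * D 1 (h/2))
        + (\<Sum>k=1..n-1. real k powr (1-\<alpha>) * (D 0 (real (n-k+1) * h) - 2 * D 0 (real (n-k) * h)
                          + D 0 (real (n-k-1) * h) - h^2 * D 2 (real (n-k) * h)))\<bar>
    \<le> x powr (-\<alpha>) * (5/4 * M * x + 19 * M * x^2) * h^2"
    unfolding scale[symmetric] by (intro mult_left_mono) auto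
  then show ?thesis
    unfolding scheme_error_eq[OF \<open>1 \<le> n\<close> h(1)] abs_mult by simp
qed

lemma scheme_error_bigo:
  fixes \<alpha> x :: real
  assumes "\<alpha> \<le> 1" "0 < x" and C: "C_r_derivs 4 x y D"
  shows "(\<lambda>n::nat. (1 / (x / real n) powr \<alpha>) *
                (\<Sum>k=0..n. sigma \<alpha> n k * y (real (n - k) * (x / real n)))
              - ((x / real n) powr (2 - \<alpha>) *
                   (\<Sum>k=1..n-1. real k powr (1 - \<alpha>) * D 2 (real (n - k) * (x / real n)))
                 + (real n * (x / real n)) powr (1 - \<alpha>) * D 1 ((x / real n) / 2)))
    \<in> O(\<lambda>n. (x / real n)^2)"
proof -
  have der: "\<forall>k<4. \<forall>t\<in>{0..x}. (D k has_real_derivative D (Suc k) t) (at t within {0..x})"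
    and y: "D 0 = y" using C by (auto simp: C_r_derivs_def)
  obtain M3 M4 where "\<forall>t\<in>{0..x}. \<bar>D 3 t\<bar> \<le> M3" "\<forall>t\<in>{0..x}. \<bar>D 4 t\<bar> \<le> M4"
    using C_r_derivs_bounded[OF C, of 3] C_r_derivs_bounded[OF C, of 4] by auto
  then have "\<forall>t\<in>{0..x}. \<bar>D 3 t\<bar> \<le> max 0 (max M3 M4)"
      "\<forall>t\<in>{0..x}. \<bar>D 4 t\<bar> \<le> max 0 (max M3 M4)" "0 \<le> max 0 (max M3 M4)"
    by fastforce+
  from scheme_error_bound[OF der this assms(1,2)] show ?thesis
    unfolding y by (intro bigoI eventually_mono[OF eventually_ge_at_top[of 1]]) simp
qed

theorem lemma5:
  fixes \<alpha> x :: real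
  assumes "0 < \<alpha>" "\<alpha> < 1" "0 < x"
  shows "\<exists>r::nat. \<forall>y D. C_r_derivs r x y D \<longrightarrow>
    (\<lambda>n::nat. (1 / (x / real n) powr \<alpha>) *
                (\<Sum>k=0..n. sigma \<alpha> n k * y (real (n - k) * (x / real n)))
              - ((x / real n) powr (2 - \<alpha>) *
                   (\<Sum>k=1..n-1. real k powr (1 - \<alpha>) * D 2 (real (n - k) * (x / real n)))
                 + (real n * (x / real n)) powr (1 - \<alpha>) * D 1 ((x / real n) / 2)))
    \<in> O(\<lambda>n. (x / real n)^2)"
  using assms by (intro exI[of _ 4] allI impI scheme_error_bigo) auto

end
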